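(* Assume Assumptions 1, 2 and 3 (see context) hold, let $T\ge 1$ and let $(\eta_t)_{t\ge1}$ be a non-increasing sequence of positive step sizes used by SMD. Fix $\delta\in(0,1)$. Let $Y_1,Y_2$ be positive numbers (which may depend on $\delta$ and on $(\eta_t)_{t=1}^T$) such that, with $$\gamma=\sqrt{Y_2+\sum_{t=1}^T\eta_t^2\,(G^2+\sigma^2)}$$ and $$D_t=\max\Big\{\gamma,\sqrt{B_\psi(x^*,x_1)},\dots,\sqrt{B_\psi(x^*,x_t)}\Big\},\qquad t\ge1,$$ it holds that $$P\Big(\max_{s\le T}\sum_{t=1}^s\eta_t\Big\langle \xi_t,\frac{x_t-x^*}{\sqrt2\,D_t}\Big\rangle>Y_1\Big)\le\frac\delta2\quad\text{and}\quad P\Big(\sum_{t=1}^T\eta_t^2\big(\|\xi_t\|_*^2-\mathbb E_t\|\xi_t\|_*^2\big)>Y_2\Big)\le\frac\delta2 .$$ Then, with probability at least $1-\delta$, the average iterate $\bar x_T=\frac1T\sum_{t=1}^Tx_t$ satisfies $$f(\bar x_T)-f^*\le\frac{3}{\eta_T T}\Big(B_\psi(x^*,x_1)+\sum_{t=1}^T\eta_t^2(G^2+\sigma^2)+2Y_1^2+Y_2\Big).$$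
   Context: Let $\|\cdot\|$ be a norm on $\mathbb R^d$ with dual norm $\|y\|_*=\sup_{\|w\|\le1}\langle y,w\rangle$. Let $\mathcal X\subseteq\mathbb R^d$ be nonempty, closed and convex, and $f:\mathcal X\to\mathbb R$ convex with a minimizer $x^*\in\mathcal X$, $f^*=f(x^* )$; $\partial f(x)$ is the subdifferential. Assumption 1: the regularizer $\psi:\mathbb R^d\to(-\infty,+\infty]$ is closed, convex, differentiable on $\mathrm{int}(\mathrm{dom}\,\psi)\neq\emptyset$ (where $\mathrm{dom}\,\psi=\{\psi<\infty\}$), $1$-strongly convex w.r.t. $\|\cdot\|$ (i.e. $\psi(x)\ge\psi(y)+\langle x-y,g\rangle+\frac12\|x-y\|^2$ for $x,y\in\mathrm{dom}\,\psi$, $g\in\partial\psi(y)$), $\mathcal X\subseteq\mathrm{dom}\,\psi$, and either $\|\nabla\psi(y_k)\|_2\to\infty$ for every sequence $(y_k)$ in $\mathrm{int}\,\mathrm{dom}\,\psi$ converging to a boundary point of $\mathrm{dom}\,\psi$, or $\mathcal X\subseteq\mathrm{int}\,\mathrm{dom}\,\psi$. The Bregman divergence is $B_\psi(x,y)=\psi(x)-\psi(y)-\langle x-y,\nabla\psi(y)\rangle$. Stochastic Mirror Descent (SMD) with non-increasing positive step sizes $(\eta_t)$: pick $x_1\in\mathrm{int}\,\mathrm{dom}\,\psi$; at step $t$ the oracle returns $\hat g_t=g_t-\xi_t$ with $g_t\in\partial f(x_t)$ and noise $\xi_t\in\mathbb R^d$, and $x_{t+1}=\arg\min_{x\in\mathcal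 X}\langle\hat g_t,x\rangle+\eta_t^{-1}B_\psi(x,x_t)$. $\mathcal F_t$ is the $\sigma$-algebra generated by $\xi_1,\dots,\xi_t$ ($\mathcal F_0$ trivial), so $x_t$ and $g_t$ are $\mathcal F_{t-1}$-measurable; $\mathbb E_t[\cdot]=\mathbb E[\cdot\mid\mathcal F_{t-1}]$, and $\mathbb E_t[\xi_t]=0$. Assumption 2: $\|g\|_*\le G$ for all $x\in\mathcal X$, $g\in\partial f(x)$. Assumption 3: $\mathbb E_t\|\xi_t\|_*^2\le\sigma^2$ for all $t$. *)

theory Defs
  imports "HOL-Probability.Probability"
begin

definition is_norm :: "(real^'d \<Rightarrow> real) \<Rightarrow> bool" where
  "is_norm N \<longleftrightarrow> (\<forall>x. N x = 0 \<longrightarrow> x = 0) \<and> (\<forall>x y. N (x + y) \<le> N x + N y)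
                  \<and> (\<forall>c x. N (c *\<^sub>R x) = \<bar>c\<bar> * N x)"

definition dual_norm :: "(real^'d \<Rightarrow> real) \<Rightarrow> real^'d \<Rightarrow> real" where
  "dual_norm N y = Sup {y \<bullet> w | w. N w \<le> 1}"

definition subgrad :: "(real^'d) set \<Rightarrow> (real^'d \<Rightarrow> real) \<Rightarrow> real^'d \<Rightarrow> (real^'d) set" where
  "subgrad S h x = {g. \<forall>y\<in>S. h y \<ge> h x + g \<bullet> (y - x)}"

definition bregman :: "(real^'d \<Rightarrow> real) \<Rightarrow> (real^'d \<Rightarrow> real^'d) \<Rightarrow> real^'d \<Rightarrow> real^'d \<Rightarrow> real" where
  "bregman psi gpsi x y = psi x - psi y - (x - y) \<bullet> gpsi y"

definition gen_filt :: "'w measure \<Rightarrow> (nat \<Rightarrow> 'w \<Rightarrow> real^'d) \<Rightarrow> nat \<Rightarrow> 'w measure" where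
  "gen_filt M xi t = sigma (space M)
      (\<Union>s\<in>{1..t}. {xi s -` A \<inter> space M | A. A \<in> sets borel})"

definition Dseq :: "real \<Rightarrow> (real^'d \<Rightarrow> real) \<Rightarrow> (real^'d \<Rightarrow> real^'d) \<Rightarrow> real^'d
                   \<Rightarrow> (nat \<Rightarrow> 'w \<Rightarrow> real^'d) \<Rightarrow> nat \<Rightarrow> 'w \<Rightarrow> real" where
  "Dseq \<gamma> psi gpsi xs x t \<omega> = Max (insert \<gamma> ((\<lambda>s. sqrt (bregman psi gpsi xs (x s \<omega>))) ` {1..t}))"

end

theory Submission
  imports Defs
begin

text \<open>
  The barrier condition keeps every iterate in the interior of \<open>dom \<psi>\<close>, where \<open>\<psi>\<close> is
  differentiable. There the optimality of the mirror step, the three-point identity and the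
  strong convexity of \<open>\<psi>\<close> give the one-step inequality
  \<open>\<eta>\<^sub>t (f x\<^sub>t - f\<^sup>*) + B(x\<^sup>*, x\<^sub>t\<^sub>+\<^sub>1) - B(x\<^sup>*, x\<^sub>t) \<le> \<eta>\<^sub>t\<^sup>2 (G\<^sup>2 + \<parallel>\<xi>\<^sub>t\<parallel>\<^sub>*\<^sup>2) + \<eta>\<^sub>t \<langle>\<xi>\<^sub>t, x\<^sub>t - x\<^sup>*\<rangle>\<close>.
  Dividing the \<open>t\<close>-th inequality by the nondecreasing \<open>\<surd>2 D\<^sub>t\<close> and summing, the noise terms become
  exactly the normalized sums controlled by \<open>Y\<^sub>1\<close>, and the squared noise is controlled by
  \<open>Y\<^sub>2\<close> and \<open>\<sigma>\<close>. With \<open>K = (\<surd>B(x\<^sup>*, x\<^sub>1) + \<gamma>)/\<surd>2 + Y\<^sub>1\<close> this gives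
  \<open>B(x\<^sup>*, x\<^sub>s) \<le> \<surd>2 K D\<^sub>s\<close>, hence \<open>D\<^sub>t \<le> \<surd>2 K\<close>: the iterates stay bounded without any assumption
  on the diameter of \<open>X\<close>. Multiplying back by \<open>\<surd>2 D\<^sub>t \<le> 2K\<close> bounds
  \<open>\<Sum>\<^sub>t \<eta>\<^sub>t (f x\<^sub>t - f\<^sup>*)\<close> by \<open>2K\<^sup>2 \<le> 3 (B(x\<^sup>*, x\<^sub>1) + \<gamma>\<^sup>2 + 2 Y\<^sub>1\<^sup>2)\<close>, and Jensen's inequality
  together with \<open>\<eta>\<^sub>T \<le> \<eta>\<^sub>t\<close> finishes the proof.
\<close>

section \<open>Norms and dual norms\<close>

lemma is_normD:
  assumes "is_norm N"
  shows "N x = 0 \<Longrightarrow> x = 0" "N (x + y) \<le> N x + N y" "N (c *\<^sub>R x) = \<bar>c\<bar> * N x"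
  using assms by (auto simp: is_norm_def)

lemma is_norm_zero: "is_norm N \<Longrightarrow> N 0 = 0"
  using is_normD(3)[of N 0 0] by simp

lemma is_norm_minus: "is_norm N \<Longrightarrow> N (- x) = N x"
  using is_normD(3)[of N "-1" x] by simp

lemma is_norm_minus_commute: "is_norm N \<Longrightarrow> N (x - y) = N (y - x)"
  using is_norm_minus[of N "y - x"] by simp

lemma is_norm_nonneg: "is_norm N \<Longrightarrow> 0 \<le> N x"
  using is_normD(2)[of N x "- x"] is_norm_zero[of N] is_norm_minus[of N x] by simp

lemma is_norm_sum:
  assumes "is_norm N"
  shows "N (\<Sum>i\<in>A. v i) \<le> (\<Sum>i\<in>A. N (v i))"
proof (induction A rule: infinite_finite_induct)
  case (insert a A)
  then show ?case using is_normD(2)[OF assms, of "v a" "sum v A"] by simp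
qed (simp_all add: is_norm_zero[OF assms])

lemma is_norm_upper_bound:
  assumes "is_norm N"
  shows "N x \<le> (\<Sum>b\<in>Basis. N b) * norm x"
proof -
  have "N x = N (\<Sum>b\<in>Basis. (x \<bullet> b) *\<^sub>R b)"
    by (simp add: euclidean_representation)
  also have "\<dots> \<le> (\<Sum>b\<in>Basis. \<bar>x \<bullet> b\<bar> * N b)"
    by (rule order_trans[OF is_norm_sum[OF assms]]) (simp add: is_normD(3)[OF assms])
  also have "\<dots> \<le> (\<Sum>b\<in>Basis. norm x * N b)"
    by (intro sum_mono mult_right_mono) (auto simp: Basis_le_norm is_norm_nonneg[OF assms])
  finally show ?thesis
    by (simp add: sum_distrib_left mult.commute)
qed

lemma is_norm_lipschitz:
  fixes N :: "real^'d \<Rightarrow> real"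
  assumes "is_norm N"
  shows "lipschitz_on (\<Sum>b\<in>Basis. N b) UNIV N"
proof (rule lipschitz_onI)
  fix x y :: "real^'d"
  have "N x \<le> N y + N (x - y)" "N y \<le> N x + N (x - y)"
    using is_normD(2)[OF assms, of y "x - y"] is_normD(2)[OF assms, of x "y - x"]
      is_norm_minus_commute[OF assms, of x y] by simp_all
  then show "dist (N x) (N y) \<le> (\<Sum>b\<in>Basis. N b) * dist x y"
    using is_norm_upper_bound[OF assms, of "x - y"] by (simp add: dist_real_def dist_norm)
qed (simp add: sum_nonneg is_norm_nonneg[OF assms])

lemma is_norm_lower_bound:
  fixes N :: "real^'d \<Rightarrow> real"
  assumes "is_norm N"
  obtains c where "0 < c" "\<And>x. c * norm x \<le> N x"
proof -
  have "continuous_on (sphere 0 1) N"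
    using lipschitz_on_continuous_on[OF is_norm_lipschitz[OF assms]] continuous_on_subset by blast
  then obtain m :: "real^'d" where m: "m \<in> sphere 0 1" "\<And>y. y \<in> sphere 0 1 \<Longrightarrow> N m \<le> N y"
    using continuous_attains_inf[OF compact_sphere, of "0::real^'d" 1 N] by auto
  have "0 < N m"
    using m(1) is_normD(1)[OF assms, of m] is_norm_nonneg[OF assms, of m] by force
  moreover have "N m * norm x \<le> N x" for x
  proof (cases "x = 0")
    case False
    then have "N m \<le> N ((1 / norm x) *\<^sub>R x)"
      by (intro m(2)) simp
    then show ?thesis
      using False by (simp add: is_normD(3)[OF assms] field_simps)
  qed (simp add: is_norm_zero[OF assms])
  ultimately show ?thesis
    using that by blast
qed

lemma dual_norm_bdd_above:
  assumes "is_norm N"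
  shows "bdd_above {y \<bullet> w | w. N w \<le> 1}"
proof -
  obtain c where c: "0 < c" "\<And>x. c * norm x \<le> N x"
    using is_norm_lower_bound[OF assms] by blast
  have "y \<bullet> w \<le> norm y / c" if "N w \<le> 1" for w
  proof -
    have "norm w \<le> 1 / c"
      using c order_trans[OF c(2)[of w] that] by (simp add: field_simps)
    then have "norm y * norm w \<le> norm y / c"
      using mult_left_mono[of "norm w" "1 / c" "norm y"] by simp
    then show ?thesis
      using norm_cauchy_schwarz[of y w] by simp
  qed
  then show ?thesis
    by (auto intro!: bdd_aboveI)
qed

lemma inner_le_dual_norm_unit: "is_norm N \<Longrightarrow> N w \<le> 1 \<Longrightarrow> y \<bullet> w \<le> dual_norm N y"
  unfolding dual_norm_def by (intro cSup_upper dual_norm_bdd_above) auto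

lemma dual_norm_nonneg: "is_norm N \<Longrightarrow> 0 \<le> dual_norm N y"
  using inner_le_dual_norm_unit[of N 0 y] is_norm_zero[of N] by simp

lemma inner_le_dual_norm:
  assumes "is_norm N"
  shows "y \<bullet> w \<le> dual_norm N y * N w"
proof (cases "N w = 0")
  case True
  then show ?thesis
    using is_normD(1)[OF assms, of w] by simp
next
  case False
  then have pos: "0 < N w"
    using is_norm_nonneg[OF assms, of w] by linarith
  then have "y \<bullet> ((1 / N w) *\<^sub>R w) \<le> dual_norm N y"
    by (intro inner_le_dual_norm_unit[OF assms]) (simp add: is_normD(3)[OF assms])
  then show ?thesis
    using pos by (simp add: field_simps)
qed

lemma dual_norm_diff_le:
  assumes "is_norm N"
  shows "dual_norm N (a - b) \<le> dual_norm N a + dual_norm N b"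
  unfolding dual_norm_def[of N "a - b"]
proof (rule cSup_least)
  show "{(a - b) \<bullet> w |w. N w \<le> 1} \<noteq> {}"
  proof -
    have "N 0 \<le> 1"
      by (simp add: is_norm_zero[OF assms])
    then show ?thesis
      by blast
  qed
  fix z assume "z \<in> {(a - b) \<bullet> w |w. N w \<le> 1}"
  then obtain w where w: "z = (a - b) \<bullet> w" "N w \<le> 1"
    by auto
  have "a \<bullet> w \<le> dual_norm N a" "b \<bullet> (- w) \<le> dual_norm N b"
    using w(2) is_norm_minus[OF assms, of w] by (metis inner_le_dual_norm_unit[OF assms])+
  then show "z \<le> dual_norm N a + dual_norm N b"
    using w(1) by (simp add: inner_diff_left)
qed

section \<open>Convexity and Bregman divergences\<close>

lemma has_derivative_difference_quotient_at_right:
  fixes \<phi> :: "'a::real_normed_vector \<Rightarrow> real"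
  assumes "(\<phi> has_derivative \<phi>') (at y)"
  shows "((\<lambda>h. (\<phi> (y + h *\<^sub>R d) - \<phi> y) / h) \<longlongrightarrow> \<phi>' d) (at_right 0)"
proof -
  have "((\<lambda>s. y + s *\<^sub>R d) has_derivative (\<lambda>s. s *\<^sub>R d)) (at 0)"
    by (auto intro!: derivative_eq_intros)
  from has_derivative_compose[OF this, of \<phi> \<phi>'] assms
  have "((\<lambda>s. \<phi> (y + s *\<^sub>R d)) has_derivative (\<lambda>s. \<phi>' (s *\<^sub>R d))) (at 0)"
    by simp
  moreover have "(\<lambda>s. \<phi>' (s *\<^sub>R d)) = (*) (\<phi>' d)"
    using linear_cmul[OF has_derivative_linear[OF assms]] by (auto simp: mult.commute)
  ultimately have "((\<lambda>s. \<phi> (y + s *\<^sub>R d)) has_field_derivative \<phi>' d) (at 0)"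
    by (simp add: has_field_derivative_def)
  then show ?thesis
    by (simp add: DERIV_def filterlim_mono[OF _ _ at_le])
qed

lemma convex_on_gradient_inequality:
  fixes \<phi> :: "'a::real_normed_vector \<Rightarrow> real"
  assumes cv: "convex_on D \<phi>" and "y \<in> D" "u \<in> D" and der: "(\<phi> has_derivative \<phi>') (at y)"
  shows "\<phi> y + \<phi>' (u - y) \<le> \<phi> u"
proof -
  have "(\<phi> (y + h *\<^sub>R (u - y)) - \<phi> y) / h \<le> \<phi> u - \<phi> y" if "0 < h" "h < 1" for h
  proof -
    have "\<phi> ((1 - h) *\<^sub>R y + h *\<^sub>R u) \<le> (1 - h) * \<phi> y + h * \<phi> u"
      using convex_onD[OF cv, of h y u] that assms(2,3) by simp
    moreover have "(1 - h) *\<^sub>R y + h *\<^sub>R u = y + h *\<^sub>R (u - y)"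
      by (simp add: algebra_simps)
    ultimately show ?thesis
      using that by (simp add: field_simps)
  qed
  then have "eventually (\<lambda>h. (\<phi> (y + h *\<^sub>R (u - y)) - \<phi> y) / h \<le> \<phi> u - \<phi> y) (at_right 0)"
    by (intro eventually_at_rightI[of 0 1]) auto
  from tendsto_upperbound[OF has_derivative_difference_quotient_at_right[OF der] this]
  show ?thesis
    by simp
qed

lemma directional_derivative_nonneg_at_minimum:
  fixes \<phi> :: "'a::real_normed_vector \<Rightarrow> real"
  assumes "convex X" "y \<in> X" "z \<in> X" and min: "\<forall>u\<in>X. \<phi> y \<le> \<phi> u"
    and der: "(\<phi> has_derivative \<phi>') (at y)"
  shows "0 \<le> \<phi>' (z - y)"
proof -
  have "0 \<le> (\<phi> (y + h *\<^sub>R (z - y)) - \<phi> y) / h" if "0 < h" "h < 1" for h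
  proof -
    have "y + h *\<^sub>R (z - y) = (1 - h) *\<^sub>R y + h *\<^sub>R z"
      by (simp add: algebra_simps)
    then have "y + h *\<^sub>R (z - y) \<in> X"
      using convexD[OF assms(1-3), of "1 - h" h] that by simp
    then show ?thesis
      using min that by simp
  qed
  then have "eventually (\<lambda>h. 0 \<le> (\<phi> (y + h *\<^sub>R (z - y)) - \<phi> y) / h) (at_right 0)"
    by (intro eventually_at_rightI[of 0 1]) auto
  from tendsto_lowerbound[OF has_derivative_difference_quotient_at_right[OF der] this]
  show ?thesis
    by simp
qed

lemma bregman_three_point:
  "bregman \<psi> g\<psi> z y - bregman \<psi> g\<psi> x y - bregman \<psi> g\<psi> z x = (g\<psi> x - g\<psi> y) \<bullet> (z - x)"
  unfolding bregman_def by (simp add: algebra_simps inner_diff_left inner_diff_right inner_commute)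

lemma bregman_prox_three_point:
  fixes \<psi> :: "real^'d \<Rightarrow> real"
  assumes "convex X" "x \<in> X" "z \<in> X" "0 < \<eta>"
    and der: "(\<psi> has_derivative (\<lambda>h. g\<psi> x \<bullet> h)) (at x)"
    and prox: "\<forall>u\<in>X. v \<bullet> x + bregman \<psi> g\<psi> x y / \<eta> \<le> v \<bullet> u + bregman \<psi> g\<psi> u y / \<eta>"
  shows "\<eta> * (v \<bullet> (x - z)) \<le> bregman \<psi> g\<psi> z y - bregman \<psi> g\<psi> z x - bregman \<psi> g\<psi> x y"
proof -
  have "((\<lambda>u. v \<bullet> u + bregman \<psi> g\<psi> u y / \<eta>) has_derivative
      (\<lambda>h. v \<bullet> h + (g\<psi> x - g\<psi> y) \<bullet> h / \<eta>)) (at x)"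
    unfolding bregman_def
    by (rule derivative_eq_intros der refl)+
      (use \<open>0 < \<eta>\<close> in \<open>auto simp: fun_eq_iff inner_diff_left inner_commute[of "g\<psi> y"] diff_divide_distrib\<close>)
  from directional_derivative_nonneg_at_minimum[OF assms(1-3) prox this]
  have "0 \<le> \<eta> * (v \<bullet> (z - x)) + (g\<psi> x - g\<psi> y) \<bullet> (z - x)"
    using \<open>0 < \<eta>\<close> by (simp add: field_simps)
  then show ?thesis
    using bregman_three_point[of \<psi> g\<psi> z y x] by (simp add: inner_diff_right algebra_simps)
qed

lemma bregman_ge_half_sq:
  fixes \<psi> :: "real^'d \<Rightarrow> real"
  assumes cv: "convex_on D \<psi>" and "y \<in> D" "u \<in> D"
    and der: "(\<psi> has_derivative (\<lambda>h. g\<psi> y \<bullet> h)) (at y)"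
    and sc: "\<forall>u\<in>D. \<forall>y\<in>D. \<forall>v\<in>subgrad D \<psi> y. \<psi> u \<ge> \<psi> y + (u - y) \<bullet> v + 1/2 * (N (u - y))^2"
  shows "1/2 * (N (u - y))^2 \<le> bregman \<psi> g\<psi> u y"
proof -
  have "g\<psi> y \<in> subgrad D \<psi> y"
    using convex_on_gradient_inequality[OF cv \<open>y \<in> D\<close> _ der]
    by (auto simp: subgrad_def inner_commute)
  then show ?thesis
    using sc assms(2,3) unfolding bregman_def by force
qed

lemma bregman_prox_minimizes_linearization:
  assumes "0 < \<eta>"
    and "v \<bullet> x + bregman \<psi> g\<psi> x y / \<eta> \<le> v \<bullet> z + bregman \<psi> g\<psi> z y / \<eta>"
  shows "\<psi> x + (\<eta> *\<^sub>R v - g\<psi> y) \<bullet> x \<le> \<psi> z + (\<eta> *\<^sub>R v - g\<psi> y) \<bullet> z"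
proof -
  have "\<eta> * (v \<bullet> x) + bregman \<psi> g\<psi> x y \<le> \<eta> * (v \<bullet> z) + bregman \<psi> g\<psi> z y"
    using mult_left_mono[OF assms(2), of \<eta>] assms(1) by (simp add: distrib_left)
  then show ?thesis
    unfolding bregman_def by (simp add: inner_diff_left inner_diff_right inner_commute algebra_simps)
qed

lemma gradient_bounded_on_segment_to_minimizer:
  fixes \<psi> :: "'a::euclidean_space \<Rightarrow> real"
  assumes cD: "convex D" and cv: "convex_on D \<psi>" and X: "convex X" "X \<subseteq> D"
    and w: "w \<in> X" "w \<in> interior D"
    and der: "\<forall>y\<in>interior D. (\<psi> has_derivative (\<lambda>h. g\<psi> y \<bullet> h)) (at y)"
    and z0: "z0 \<in> X" and min: "\<forall>z\<in>X. \<psi> z0 + q \<bullet> z0 \<le> \<psi> z + q \<bullet> z"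
  obtains R where "\<And>l. 0 < l \<Longrightarrow> l \<le> 1 \<Longrightarrow> norm (g\<psi> (z0 + l *\<^sub>R (w - z0))) \<le> R"
proof -
  define d where "d = w - z0"
  have z0D: "z0 \<in> D"
    using z0 X by blast
  obtain r where r: "0 < r" "ball w r \<subseteq> D" "\<And>u. u \<in> ball w r \<Longrightarrow> \<psi> u < \<psi> w + 1"
  proof -
    have "isCont \<psi> w"
      using der w(2) has_derivative_continuous by blast
    then obtain r1 where "0 < r1" "\<And>u. dist u w < r1 \<Longrightarrow> \<bar>\<psi> u - \<psi> w\<bar> < 1"
      unfolding continuous_at_eps_delta dist_real_def by (meson zero_less_one)
    moreover obtain r2 where "0 < r2" "ball w r2 \<subseteq> D"
      using w(2) interior_subset open_interior openE by (metis subset_trans)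
    ultimately show ?thesis
      by (intro that[of "min r1 r2"]) (force simp: dist_commute abs_less_iff)+
  qed
  have "norm (g\<psi> (z0 + l *\<^sub>R d)) \<le> 2 * (\<psi> w + 1 - \<psi> z0 + q \<bullet> d) / r"
    if l: "0 < l" "l \<le> 1" for l
  proof -
    define y where "y = z0 + l *\<^sub>R d"
    define g where "g = g\<psi> y"
    have y_int: "y \<in> interior D"
      using mem_interior_convex_shrink[OF cD w(2) z0D l] by (simp add: y_def d_def algebra_simps)
    have "y = (1 - l) *\<^sub>R z0 + l *\<^sub>R w"
      by (simp add: y_def d_def algebra_simps)
    then have "y \<in> X"
      using convexD[OF X(1) z0 w(1), of "1 - l" l] l by simp
    then have qd: "\<psi> z0 \<le> \<psi> y + l * (q \<bullet> d)"
      using min by (force simp: y_def inner_add_right)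
    have gi: "\<psi> y + g \<bullet> (u - y) \<le> \<psi> u" if "u \<in> D" for u
      using convex_on_gradient_inequality[OF cv interior_subset[THEN subsetD, OF y_int] that] der y_int
      by (simp add: g_def)
    have "l * (- (q \<bullet> d)) \<le> l * (g \<bullet> d)"
      using gi[OF z0D] qd by (simp add: y_def algebra_simps)
    then have gd: "- (q \<bullet> d) \<le> g \<bullet> d"
      using l(1) mult_le_cancel_left_pos by blast
    have "\<psi> z0 - q \<bullet> d + r / 2 * norm g < \<psi> w + 1"
    proof (cases "g = 0")
      case True
      have "\<psi> y \<le> \<psi> w"
        using gi[of w] w X True by auto
      moreover have "l * (q \<bullet> d) \<le> q \<bullet> d"
        using gd True l by (simp add: mult_left_le_one_le)
      ultimately show ?thesis
        using True qd by simp
    next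
      case False
      define u where "u = w + (r / 2 / norm g) *\<^sub>R g"
      have "u \<in> ball w r"
        using False r(1) by (simp add: u_def dist_norm)
      then have "\<psi> y + g \<bullet> (u - y) < \<psi> w + 1"
        using gi r(2,3) by (meson le_less_trans subsetD)
      moreover have "g \<bullet> (u - y) = (1 - l) * (g \<bullet> d) + r / 2 * norm g"
        using False by (simp add: u_def y_def d_def inner_diff_right inner_add_right
            power2_norm_eq_inner[symmetric] power2_eq_square algebra_simps)
      moreover have "(1 - l) * (- (q \<bullet> d)) \<le> (1 - l) * (g \<bullet> d)"
        using gd l by (intro mult_left_mono) auto
      ultimately show ?thesis
        using qd by (simp add: algebra_simps)
    qed
    then show ?thesis
      using r(1) by (simp add: g_def y_def field_simps)
  qed
  then show ?thesis
    using that d_def by blast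
qed

lemma linearized_minimizer_in_interior:
  fixes \<psi> :: "'a::euclidean_space \<Rightarrow> real"
  assumes cD: "convex D" and cv: "convex_on D \<psi>" and X: "convex X" "X \<subseteq> D"
    and w: "w \<in> X" "w \<in> interior D"
    and der: "\<forall>y\<in>interior D. (\<psi> has_derivative (\<lambda>h. g\<psi> y \<bullet> h)) (at y)"
    and z0: "z0 \<in> X" and min: "\<forall>z\<in>X. \<psi> z0 + q \<bullet> z0 \<le> \<psi> z + q \<bullet> z"
    and barrier: "\<forall>y :: nat \<Rightarrow> 'a. \<forall>p. (\<forall>k. y k \<in> interior D) \<and> y \<longlonglongrightarrow> p
                    \<and> p \<in> frontier D \<longrightarrow> filterlim (\<lambda>k. norm (g\<psi> (y k))) at_top sequentially"
  shows "z0 \<in> interior D"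
proof (rule ccontr)
  assume z0_int: "z0 \<notin> interior D"
  obtain R where R: "\<And>l. 0 < l \<Longrightarrow> l \<le> 1 \<Longrightarrow> norm (g\<psi> (z0 + l *\<^sub>R (w - z0))) \<le> R"
    using gradient_bounded_on_segment_to_minimizer[OF assms(1-9)] by blast
  define y where "y k = z0 + (1 / Suc k) *\<^sub>R (w - z0)" for k
  have y_int: "\<forall>k. y k \<in> interior D"
  proof
    fix k
    have "y k = z0 - (1 / Suc k) *\<^sub>R (z0 - w)"
      by (simp add: y_def algebra_simps)
    then show "y k \<in> interior D"
      using mem_interior_convex_shrink[OF cD w(2), of z0 "1 / Suc k"] z0 X by auto
  qed
  have y_lim: "y \<longlonglongrightarrow> z0 + 0 *\<^sub>R (w - z0)"
    unfolding y_def by (intro tendsto_intros LIMSEQ_Suc[OF lim_1_over_n])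
  have "z0 \<in> frontier D"
    using z0 X z0_int closure_subset by (auto simp: frontier_def)
  then have "filterlim (\<lambda>k. norm (g\<psi> (y k))) at_top sequentially"
    using barrier[rule_format, of y z0] y_int y_lim by simp
  then have "eventually (\<lambda>k. R + 1 \<le> norm (g\<psi> (y k))) sequentially"
    by (simp add: filterlim_at_top)
  then obtain k where "R + 1 \<le> norm (g\<psi> (y k))"
    by (auto simp: eventually_sequentially)
  moreover have "norm (g\<psi> (y k)) \<le> R"
    unfolding y_def by (rule R) simp_all
  ultimately show False
    by simp
qed

lemma bregman_prox_in_interior:
  fixes \<psi> :: "real^'d \<Rightarrow> real"
  assumes "convex D" "convex_on D \<psi>" "convex X" "X \<subseteq> D"
    and "w \<in> X" "w \<in> interior D"
    and "\<forall>y\<in>interior D. (\<psi> has_derivative (\<lambda>h. g\<psi> y \<bullet> h)) (at y)"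
    and x: "x \<in> X" and "0 < \<eta>"
    and prox: "\<forall>z\<in>X. v \<bullet> x + bregman \<psi> g\<psi> x y / \<eta> \<le> v \<bullet> z + bregman \<psi> g\<psi> z y / \<eta>"
    and barrier: "(\<forall>y :: nat \<Rightarrow> real^'d. \<forall>p. (\<forall>k. y k \<in> interior D) \<and> y \<longlonglongrightarrow> p
                    \<and> p \<in> frontier D \<longrightarrow> filterlim (\<lambda>k. norm (g\<psi> (y k))) at_top sequentially)
                 \<or> X \<subseteq> interior D"
  shows "x \<in> interior D"
  using barrier
proof
  assume barrier: "\<forall>y :: nat \<Rightarrow> real^'d. \<forall>p. (\<forall>k. y k \<in> interior D) \<and> y \<longlonglongrightarrow> p
                    \<and> p \<in> frontier D \<longrightarrow> filterlim (\<lambda>k. norm (g\<psi> (y k))) at_top sequentially"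
  have "\<forall>z\<in>X. \<psi> x + (\<eta> *\<^sub>R v - g\<psi> y) \<bullet> x \<le> \<psi> z + (\<eta> *\<^sub>R v - g\<psi> y) \<bullet> z"
  proof
    fix z assume "z \<in> X"
    with prox show "\<psi> x + (\<eta> *\<^sub>R v - g\<psi> y) \<bullet> x \<le> \<psi> z + (\<eta> *\<^sub>R v - g\<psi> y) \<bullet> z"
      by (intro bregman_prox_minimizes_linearization[OF \<open>0 < \<eta>\<close>]) blast
  qed
  then show ?thesis
    by (rule linearized_minimizer_in_interior[OF assms(1-7) x _ barrier])
next
  assume "X \<subseteq> interior D"
  then show ?thesis
    using x by blast
qed

section \<open>A recursion controlled by its running maximum\<close>

definition running_max :: "real \<Rightarrow> (nat \<Rightarrow> real) \<Rightarrow> nat \<Rightarrow> real" where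
  "running_max \<gamma> b t = Max (insert \<gamma> (b ` {1..t}))"

lemma running_max_ge_base: "\<gamma> \<le> running_max \<gamma> b t"
  unfolding running_max_def by (rule Max_ge) auto

lemma running_max_ge: "1 \<le> s \<Longrightarrow> s \<le> t \<Longrightarrow> b s \<le> running_max \<gamma> b t"
  unfolding running_max_def by (rule Max_ge) auto

lemma running_max_mono: "s \<le> t \<Longrightarrow> running_max \<gamma> b s \<le> running_max \<gamma> b t"
  unfolding running_max_def by (rule Max_mono) auto

lemma running_max_cases:
  obtains "running_max \<gamma> b t = \<gamma>" | s where "1 \<le> s" "s \<le> t" "running_max \<gamma> b t = b s"
proof -
  have "running_max \<gamma> b t \<in> insert \<gamma> (b ` {1..t})"
    unfolding running_max_def by (rule Max_in) auto
  then show ?thesis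
    using that by auto
qed

lemma running_max_sqrt_le:
  assumes "0 < \<gamma>" "\<gamma> \<le> R"
    and "\<And>s. 1 \<le> s \<Longrightarrow> s \<le> t \<Longrightarrow> 0 \<le> B s"
    and "\<And>s. 1 \<le> s \<Longrightarrow> s \<le> t \<Longrightarrow> B s \<le> R * running_max \<gamma> (\<lambda>s. sqrt (B s)) s"
  shows "running_max \<gamma> (\<lambda>s. sqrt (B s)) t \<le> R"
proof (cases rule: running_max_cases[of \<gamma> "\<lambda>s. sqrt (B s)" t])
  case (2 s)
  let ?D = "running_max \<gamma> (\<lambda>s. sqrt (B s))"
  have "?D t * ?D t = B s"
    using 2 assms(3) by simp
  also have "\<dots> \<le> R * ?D t"
    using assms(2,4) 2 running_max_mono[of s t] running_max_ge_base[of \<gamma>] assms(1)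
    by (meson order_trans mult_left_mono less_imp_le)
  finally have "?D t * ?D t \<le> R * ?D t" .
  moreover have "0 < ?D t"
    using assms(1) running_max_ge_base by (rule less_le_trans)
  ultimately show ?thesis
    by (simp add: mult_le_cancel_right_pos)
qed (use assms(2) in simp)

text \<open>Dividing the \<open>t\<close>-th inequality by the nondecreasing \<open>c t\<close> makes the \<open>B\<close>-terms telescope.\<close>
lemma scaled_recursion_telescope:
  fixes u B e a c :: "nat \<Rightarrow> real"
  assumes c: "\<And>t. 0 < c t" "mono c" and B: "\<And>t. 0 \<le> B (Suc t)" and e: "\<And>t. 0 \<le> e t"
    and step: "\<And>t. 1 \<le> t \<Longrightarrow> t \<le> T \<Longrightarrow> u t + B (Suc t) - B t \<le> e t + c t * a t"
    and "s \<le> T"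
  shows "(\<Sum>t=1..s. u t / c t) + B (Suc s) / c (Suc s)
           \<le> B 1 / c 1 + (\<Sum>t=1..s. e t) / c 1 + (\<Sum>t=1..s. a t)"
  using \<open>s \<le> T\<close>
proof (induction s)
  case (Suc s)
  let ?t = "Suc s"
  have "(u ?t + B (Suc ?t) - B ?t) / c ?t \<le> (e ?t + c ?t * a ?t) / c ?t"
    using step[of ?t] Suc.prems c(1)[of ?t] by (simp add: divide_right_mono)
  then have "u ?t / c ?t + B (Suc ?t) / c ?t - B ?t / c ?t \<le> e ?t / c ?t + a ?t"
    using c(1)[of ?t] by (simp add: add_divide_distrib diff_divide_distrib)
  moreover have "B (Suc ?t) / c (Suc ?t) \<le> B (Suc ?t) / c ?t"
    using B c by (intro divide_left_mono) (auto simp: mono_def mult_pos_pos)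
  moreover have "e ?t / c ?t \<le> e ?t / c 1"
    using e c by (intro divide_left_mono) (auto simp: mono_def mult_pos_pos)
  ultimately show ?case
    using Suc by (simp add: add_divide_distrib)
qed simp

lemma sq_sum3_le: "(a + b + c)^2 \<le> 3 * (a^2 + b^2 + (c::real)^2)"
proof -
  have "0 \<le> (a - b)^2 + (b - c)^2 + (a - c)^2"
    by simp
  then show ?thesis
    by (simp add: power2_eq_square algebra_simps)
qed

lemma add_square_div_le:
  fixes b \<gamma> D :: real
  assumes "0 \<le> b" "0 < \<gamma>" "sqrt b \<le> D" "\<gamma> \<le> D"
  shows "(b + \<gamma>^2) / D \<le> sqrt b + \<gamma>"
proof -
  have "sqrt b * sqrt b \<le> sqrt b * D"
    by (rule mult_left_mono) (use assms in simp_all)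
  moreover have "\<gamma> * \<gamma> \<le> \<gamma> * D"
    using assms by (simp add: mult_left_mono)
  ultimately have "b + \<gamma>^2 \<le> (sqrt b + \<gamma>) * D"
    using assms(1) by (simp add: power2_eq_square distrib_right)
  then show ?thesis
    using assms(2,4) by (simp add: divide_le_eq)
qed

lemma running_max_recursion_partial_bound:
  fixes u B e a :: "nat \<Rightarrow> real" and \<gamma> Y :: real
  defines "D \<equiv> running_max \<gamma> (\<lambda>t. sqrt (B t))"
  assumes \<gamma>: "0 < \<gamma>" and Y: "0 \<le> Y"
    and B: "\<And>t. 0 \<le> B (Suc t)" and e: "\<And>t. 0 \<le> e t" and e_sum: "(\<Sum>t=1..T. e t) \<le> \<gamma>^2"
    and step: "\<And>t. 1 \<le> t \<Longrightarrow> t \<le> T \<Longrightarrow> u t + B (Suc t) - B t \<le> e t + sqrt 2 * D t * a t"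
    and a_sum: "\<And>s. 1 \<le> s \<Longrightarrow> s \<le> T \<Longrightarrow> (\<Sum>t=1..s. a t) \<le> Y"
    and "s \<le> T"
  shows "(\<Sum>t=1..s. u t / (sqrt 2 * D t)) + B (Suc s) / (sqrt 2 * D (Suc s))
           \<le> (sqrt (B 1) + \<gamma>) / sqrt 2 + Y"
proof -
  define c where "c t = sqrt 2 * D t" for t
  have c_pos: "0 < c t" for t
    using \<gamma> running_max_ge_base[of \<gamma>] by (simp add: c_def D_def less_le_trans)
  have "mono c"
    by (simp add: mono_def c_def D_def running_max_mono)
  have "(\<Sum>t=1..s. e t) \<le> \<gamma>^2"
    using \<open>s \<le> T\<close> e e_sum by (meson atLeastAtMost_iff finite_atLeastAtMost order_trans subsetI sum_mono2)
  then have "(B 1 + (\<Sum>t=1..s. e t)) / c 1 \<le> (B 1 + \<gamma>^2) / c 1"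
    using c_pos[of 1] by (intro divide_right_mono) auto
  then have "B 1 / c 1 + (\<Sum>t=1..s. e t) / c 1 \<le> (B 1 + \<gamma>^2) / D 1 / sqrt 2"
    by (simp add: c_def add_divide_distrib mult.commute)
  also have "\<dots> \<le> (sqrt (B 1) + \<gamma>) / sqrt 2"
    using add_square_div_le[OF B[of 0] \<gamma>] running_max_ge[of 1 1 "\<lambda>t. sqrt (B t)" \<gamma>] running_max_ge_base[of \<gamma>]
    by (intro divide_right_mono) (simp_all add: D_def)
  finally have "B 1 / c 1 + (\<Sum>t=1..s. e t) / c 1 \<le> (sqrt (B 1) + \<gamma>) / sqrt 2" .
  moreover have "(\<Sum>t=1..s. a t) \<le> Y"
    using a_sum[of s] \<open>s \<le> T\<close> Y by (cases "s = 0") auto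
  moreover have step_c: "u t + B (Suc t) - B t \<le> e t + c t * a t" if "1 \<le> t" "t \<le> T" for t
    using step[OF that] by (simp add: c_def)
  ultimately show ?thesis
    using scaled_recursion_telescope[OF c_pos \<open>mono c\<close> B e step_c \<open>s \<le> T\<close>]
    by (simp add: c_def)
qed

lemma running_max_recursion_running_max_le:
  fixes u B e a :: "nat \<Rightarrow> real" and \<gamma> Y :: real
  defines "D \<equiv> running_max \<gamma> (\<lambda>t. sqrt (B t))"
  assumes \<gamma>: "0 < \<gamma>" and Y: "0 \<le> Y"
    and u: "\<And>t. 1 \<le> t \<Longrightarrow> t \<le> T \<Longrightarrow> 0 \<le> u t"
    and B: "\<And>t. 0 \<le> B (Suc t)" and e: "\<And>t. 0 \<le> e t" and e_sum: "(\<Sum>t=1..T. e t) \<le> \<gamma>^2"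
    and step: "\<And>t. 1 \<le> t \<Longrightarrow> t \<le> T \<Longrightarrow> u t + B (Suc t) - B t \<le> e t + sqrt 2 * D t * a t"
    and a_sum: "\<And>s. 1 \<le> s \<Longrightarrow> s \<le> T \<Longrightarrow> (\<Sum>t=1..s. a t) \<le> Y"
  shows "D (Suc T) \<le> sqrt (B 1) + \<gamma> + sqrt 2 * Y"
  unfolding D_def
proof (rule running_max_sqrt_le[OF \<gamma>])
  define K where "K = (sqrt (B 1) + \<gamma>) / sqrt 2 + Y"
  have K: "sqrt (B 1) + \<gamma> + sqrt 2 * Y = sqrt 2 * K"
    by (simp add: K_def field_simps)
  show "\<gamma> \<le> sqrt (B 1) + \<gamma> + sqrt 2 * Y"
    using B[of 0] Y by simp
  show "0 \<le> B s" if "1 \<le> s" for s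
    using B[of "s - 1"] that by simp
  fix s assume "1 \<le> s" "s \<le> Suc T"
  then obtain s' where s: "s = Suc s'" "s' \<le> T"
    by (cases s) auto
  have D_pos: "0 < D t" for t
    using \<gamma> running_max_ge_base[of \<gamma>] by (simp add: D_def less_le_trans)
  have "0 \<le> (\<Sum>t=1..s'. u t / (sqrt 2 * D t))"
    using s(2) u D_pos by (intro sum_nonneg divide_nonneg_pos) auto
  then have "B s / (sqrt 2 * D s) \<le> K"
    using running_max_recursion_partial_bound[OF \<gamma> Y B e e_sum step[unfolded D_def] a_sum s(2)] s(1)
    by (simp add: K_def D_def)
  then show "B s \<le> (sqrt (B 1) + \<gamma> + sqrt 2 * Y) * running_max \<gamma> (\<lambda>s. sqrt (B s)) s"
    using D_pos[of s] unfolding K by (simp add: D_def pos_divide_le_eq mult_ac)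
qed

lemma running_max_recursion_bound:
  fixes u B e a :: "nat \<Rightarrow> real" and \<gamma> Y :: real
  defines "D \<equiv> running_max \<gamma> (\<lambda>t. sqrt (B t))"
  assumes \<gamma>: "0 < \<gamma>" and Y: "0 \<le> Y"
    and u: "\<And>t. 1 \<le> t \<Longrightarrow> t \<le> T \<Longrightarrow> 0 \<le> u t"
    and B: "\<And>t. 0 \<le> B (Suc t)" and e: "\<And>t. 0 \<le> e t" and e_sum: "(\<Sum>t=1..T. e t) \<le> \<gamma>^2"
    and step: "\<And>t. 1 \<le> t \<Longrightarrow> t \<le> T \<Longrightarrow> u t + B (Suc t) - B t \<le> e t + sqrt 2 * D t * a t"
    and a_sum: "\<And>s. 1 \<le> s \<Longrightarrow> s \<le> T \<Longrightarrow> (\<Sum>t=1..s. a t) \<le> Y"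
  shows "(\<Sum>t=1..T. u t) \<le> 3 * (B 1 + \<gamma>^2 + 2 * Y^2)"
proof -
  define c where "c t = sqrt 2 * D t" for t
  define K where "K = (sqrt (B 1) + \<gamma>) / sqrt 2 + Y"
  have c_pos: "0 < c t" for t
    using \<gamma> running_max_ge_base[of \<gamma>] by (simp add: c_def D_def less_le_trans)
  have "c t \<le> 2 * K" if "t \<le> T" for t
  proof -
    have "D t \<le> D (Suc T)"
      using that by (simp add: D_def running_max_mono)
    also have "\<dots> \<le> sqrt (B 1) + \<gamma> + sqrt 2 * Y"
      using running_max_recursion_running_max_le[OF \<gamma> Y u B e e_sum step[unfolded D_def] a_sum]
      by (simp add: D_def)
    also have "\<dots> = sqrt 2 * K"
      by (simp add: K_def field_simps)
    finally have "D t \<le> sqrt 2 * K" .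
    then have "sqrt 2 * D t \<le> sqrt 2 * sqrt 2 * K"
      unfolding mult.assoc by (rule mult_left_mono) simp
    then show ?thesis
      by (simp add: c_def)
  qed
  then have "(\<Sum>t=1..T. c t * (u t / c t)) \<le> 2 * K * (\<Sum>t=1..T. u t / c t)"
    unfolding sum_distrib_left using u c_pos by (intro sum_mono mult_right_mono divide_nonneg_pos) auto
  moreover have "(\<Sum>t=1..T. u t / c t) \<le> K"
    using running_max_recursion_partial_bound[OF \<gamma> Y B e e_sum step[unfolded D_def] a_sum order_refl]
      divide_nonneg_pos[OF B[of T] c_pos[of "Suc T"]]
    by (simp add: c_def D_def K_def)
  moreover have "0 \<le> K"
    using B[of 0] Y \<gamma> by (simp add: K_def)
  moreover have "K^2 \<le> 3 * (B 1 / 2 + \<gamma>^2 / 2 + Y^2)"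
    using sq_sum3_le[of "sqrt (B 1) / sqrt 2" "\<gamma> / sqrt 2" Y] B[of 0] \<gamma>
    by (simp add: K_def add_divide_distrib power_divide)
  ultimately show ?thesis
    using c_pos mult_left_mono[of "\<Sum>t=1..T. u t / c t" K "2 * K"]
    by (simp add: less_imp_neq[symmetric] power2_eq_square)
qed

section \<open>Stochastic mirror descent\<close>

lemma smd_one_step_inequality:
  fixes f :: "real^'d \<Rightarrow> real"
  assumes norm: "is_norm N" and X: "convex X" "y' \<in> X" "xs \<in> X" and "0 < \<eta>"
    and der: "(\<psi> has_derivative (\<lambda>h. g\<psi> y' \<bullet> h)) (at y')"
    and sc: "1/2 * (N (y' - y))^2 \<le> bregman \<psi> g\<psi> y' y"
    and g: "g \<in> subgrad UNIV f y" "dual_norm N g \<le> G"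
    and prox: "\<forall>z\<in>X. (g - \<xi>) \<bullet> y' + bregman \<psi> g\<psi> y' y / \<eta> \<le> (g - \<xi>) \<bullet> z + bregman \<psi> g\<psi> z y / \<eta>"
  shows "\<eta> * (f y - f xs) + bregman \<psi> g\<psi> xs y' - bregman \<psi> g\<psi> xs y
           \<le> \<eta>^2 * (G^2 + (dual_norm N \<xi>)^2) + \<eta> * (\<xi> \<bullet> (y - xs))"
proof -
  define v where "v = g - \<xi>"
  have "dual_norm N v \<le> G + dual_norm N \<xi>"
    using dual_norm_diff_le[OF norm, of g \<xi>] g(2) by (simp add: v_def)
  then have "(dual_norm N v)^2 \<le> (G + dual_norm N \<xi>)^2"
    using dual_norm_nonneg[OF norm] by (intro power_mono) auto
  also have "\<dots> \<le> 2 * (G^2 + (dual_norm N \<xi>)^2)"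
    using sum_squares_bound[of G "dual_norm N \<xi>"] by (simp add: power2_sum)
  finally have v_sq: "(dual_norm N v)^2 \<le> 2 * (G^2 + (dual_norm N \<xi>)^2)" .
  \<comment> \<open>the step length is absorbed by the strong convexity of \<open>\<psi>\<close> (Fenchel--Young)\<close>
  have "\<eta> * (v \<bullet> (y - y')) \<le> (\<eta> * dual_norm N v) * N (y' - y)"
    using inner_le_dual_norm[OF norm, of v "y - y'"] is_norm_minus_commute[OF norm, of y y'] \<open>0 < \<eta>\<close>
    by (simp add: mult_left_mono)
  also have "\<dots> \<le> (\<eta> * dual_norm N v)^2 / 2 + (N (y' - y))^2 / 2"
    using sum_squares_bound[of "\<eta> * dual_norm N v" "N (y' - y)"] by simp
  also have "\<dots> \<le> \<eta>^2 * (G^2 + (dual_norm N \<xi>)^2) + bregman \<psi> g\<psi> y' y"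
  proof -
    have "(\<eta> * dual_norm N v)^2 \<le> 2 * (\<eta>^2 * (G^2 + (dual_norm N \<xi>)^2))"
      using mult_left_mono[OF v_sq, of "\<eta>^2"] by (simp add: power_mult_distrib algebra_simps)
    then show ?thesis
      using sc by linarith
  qed
  finally have local: "\<eta> * (v \<bullet> (y - y')) \<le> \<eta>^2 * (G^2 + (dual_norm N \<xi>)^2) + bregman \<psi> g\<psi> y' y" .
  have "\<eta> * (v \<bullet> (y' - xs)) \<le> bregman \<psi> g\<psi> xs y - bregman \<psi> g\<psi> xs y' - bregman \<psi> g\<psi> y' y"
    using bregman_prox_three_point[where g\<psi> = g\<psi>, OF X(1-3) \<open>0 < \<eta>\<close> der] prox by (simp add: v_def)
  moreover have "\<eta> * (f y - f xs) \<le> \<eta> * (g \<bullet> (y - xs))"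
  proof -
    have "f y + g \<bullet> (xs - y) \<le> f xs"
      using g(1) by (simp add: subgrad_def)
    then show ?thesis
      using \<open>0 < \<eta>\<close> by (simp add: inner_diff_right)
  qed
  moreover have "\<eta> * (g \<bullet> (y - xs)) = \<eta> * (v \<bullet> (y - y')) + \<eta> * (v \<bullet> (y' - xs)) + \<eta> * (\<xi> \<bullet> (y - xs))"
    by (simp add: v_def inner_diff_left inner_diff_right algebra_simps)
  ultimately show ?thesis
    using local by linarith
qed

lemma convex_average_gap_le:
  fixes f :: "'a::real_vector \<Rightarrow> real" and x :: "nat \<Rightarrow> 'a" and \<eta> :: "nat \<Rightarrow> real"
  assumes f: "convex_on UNIV f" and T: "1 \<le> T" "0 < \<eta> T"
    and \<eta>: "\<And>t. 1 \<le> t \<Longrightarrow> t \<le> T \<Longrightarrow> \<eta> T \<le> \<eta> t"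
    and gap: "\<And>t. 1 \<le> t \<Longrightarrow> t \<le> T \<Longrightarrow> f xs \<le> f (x t)"
  shows "f ((1 / real T) *\<^sub>R (\<Sum>t=1..T. x t)) - f xs
           \<le> (\<Sum>t=1..T. \<eta> t * (f (x t) - f xs)) / (\<eta> T * real T)"
proof -
  have "f ((1 / real T) *\<^sub>R (\<Sum>t=1..T. x t)) \<le> (\<Sum>t=1..T. (1 / real T) * f (x t))"
    using convex_on_sum[OF _ _ f, of "{1..T}" "\<lambda>_. 1 / real T" x] T by (simp add: scaleR_sum_right)
  also have "\<dots> = (\<Sum>t=1..T. f (x t)) / real T"
    by (simp add: sum_divide_distrib)
  also have "\<dots> = f xs + (\<Sum>t=1..T. f (x t) - f xs) / real T"
    using T by (simp add: sum_subtractf field_simps)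
  finally have "f ((1 / real T) *\<^sub>R (\<Sum>t=1..T. x t)) - f xs \<le> (\<Sum>t=1..T. f (x t) - f xs) / real T"
    by simp
  moreover have "\<eta> T * (\<Sum>t=1..T. f (x t) - f xs) \<le> (\<Sum>t=1..T. \<eta> t * (f (x t) - f xs))"
    unfolding sum_distrib_left using \<eta> gap by (intro sum_mono mult_right_mono) auto
  then have "(\<Sum>t=1..T. f (x t) - f xs) / real T \<le> (\<Sum>t=1..T. \<eta> t * (f (x t) - f xs)) / \<eta> T / real T"
    using T by (intro divide_right_mono) (simp_all add: pos_le_divide_eq mult.commute)
  ultimately show ?thesis
    by (simp add: divide_divide_eq_left)
qed

lemma weighted_noise_sum_le:
  fixes \<eta> v m :: "nat \<Rightarrow> real"
  assumes "(\<Sum>t=1..T. (\<eta> t)^2 * (v t - m t)) \<le> Y" and "\<And>t. 1 \<le> t \<Longrightarrow> t \<le> T \<Longrightarrow> m t \<le> \<sigma>^2"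
  shows "(\<Sum>t=1..T. (\<eta> t)^2 * (G^2 + v t)) \<le> Y + (\<Sum>t=1..T. (\<eta> t)^2 * (G^2 + \<sigma>^2))"
proof -
  have "(\<Sum>t=1..T. (\<eta> t)^2 * (G^2 + m t)) \<le> (\<Sum>t=1..T. (\<eta> t)^2 * (G^2 + \<sigma>^2))"
    using assms(2) by (intro sum_mono mult_left_mono) auto
  moreover have "(\<Sum>t=1..T. (\<eta> t)^2 * (G^2 + v t))
      = (\<Sum>t=1..T. (\<eta> t)^2 * (v t - m t)) + (\<Sum>t=1..T. (\<eta> t)^2 * (G^2 + m t))"
    by (simp add: sum.distrib[symmetric] algebra_simps)
  ultimately show ?thesis
    using assms(1) by linarith
qed

lemma (in prob_space) union_bound_good_event:
  assumes "\<exists>A\<in>events. prob A \<le> \<delta> / 2 \<and> {\<omega>\<in>space M. P \<omega>} \<subseteq> A"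
    and "\<exists>A\<in>events. prob A \<le> \<delta> / 2 \<and> {\<omega>\<in>space M. Q \<omega>} \<subseteq> A"
    and "AE \<omega> in M. R \<omega>"
  shows "\<exists>E\<in>events. 1 - \<delta> \<le> prob E \<and> (\<forall>\<omega>\<in>E. \<omega> \<in> space M \<and> \<not> P \<omega> \<and> \<not> Q \<omega> \<and> R \<omega>)"
proof -
  obtain A1 A2 where A: "A1 \<in> events" "prob A1 \<le> \<delta> / 2" "{\<omega>\<in>space M. P \<omega>} \<subseteq> A1"
    "A2 \<in> events" "prob A2 \<le> \<delta> / 2" "{\<omega>\<in>space M. Q \<omega>} \<subseteq> A2"
    using assms(1,2) by blast
  obtain N where N: "{\<omega>\<in>space M. \<not> R \<omega>} \<subseteq> N" "emeasure M N = 0" "N \<in> events"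
    using AE_E[OF assms(3)] by blast
  have "prob (A1 \<union> A2 \<union> N) \<le> prob A1 + prob A2 + prob N"
    using A N measure_Un_le[of A1 M A2] measure_Un_le[of "A1 \<union> A2" M N] by auto
  then have "1 - \<delta> \<le> prob (space M - (A1 \<union> A2 \<union> N))"
    using A N prob_compl[of "A1 \<union> A2 \<union> N"] by (simp add: emeasure_eq_measure)
  moreover have "space M - (A1 \<union> A2 \<union> N) \<in> events"
    using A N by auto
  ultimately show ?thesis
    using A N by blast
qed

lemma smd_iterates_interior:
  fixes \<psi> :: "real^'d \<Rightarrow> real" and x :: "nat \<Rightarrow> real^'d"
  assumes "convex D" "convex_on D \<psi>" "convex X" "X \<subseteq> D"
    and "\<forall>y\<in>interior D. (\<psi> has_derivative (\<lambda>h. g\<psi> y \<bullet> h)) (at y)"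
    and barrier: "(\<forall>y :: nat \<Rightarrow> real^'d. \<forall>p. (\<forall>k. y k \<in> interior D) \<and> y \<longlonglongrightarrow> p
                    \<and> p \<in> frontier D \<longrightarrow> filterlim (\<lambda>k. norm (g\<psi> (y k))) at_top sequentially)
                 \<or> X \<subseteq> interior D"
    and x1: "x 1 \<in> X" "x 1 \<in> interior D" and \<eta>: "\<And>t. 1 \<le> t \<Longrightarrow> 0 < \<eta> t"
    and step_rule: "\<And>t. 1 \<le> t \<Longrightarrow> x (Suc t) \<in> X \<and>
                   (\<forall>z\<in>X. v t \<bullet> x (Suc t) + bregman \<psi> g\<psi> (x (Suc t)) (x t) / \<eta> t
                          \<le> v t \<bullet> z + bregman \<psi> g\<psi> z (x t) / \<eta> t)"
    and "1 \<le> t"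
  shows "x t \<in> X \<and> x t \<in> interior D"
  using \<open>1 \<le> t\<close>
proof (induction t rule: dec_induct)
  case (step n)
  then have "1 \<le> n"
    by simp
  then show ?case
    using bregman_prox_in_interior[OF assms(1-4) x1 assms(5), of "x (Suc n)" "\<eta> n" "v n" "x n"] barrier \<eta> step_rule
    by blast
qed (use x1 in simp)

lemma Dseq_eq_running_max:
  "Dseq \<gamma> \<psi> g\<psi> xs x t \<omega> = running_max \<gamma> (\<lambda>s. sqrt (bregman \<psi> g\<psi> xs (x s \<omega>))) t"
  by (simp add: Dseq_def running_max_def)

lemma smd_trajectory_bound:
  fixes f \<psi> :: "real^'d \<Rightarrow> real" and g\<psi> :: "real^'d \<Rightarrow> real^'d" and xs :: "real^'d"
    and x \<xi> :: "nat \<Rightarrow> real^'d" and \<eta> e :: "nat \<Rightarrow> real" and \<gamma> Y :: real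
  defines "D \<equiv> running_max \<gamma> (\<lambda>t. sqrt (bregman \<psi> g\<psi> xs (x t)))"
  assumes f: "convex_on UNIV f" and T: "1 \<le> T"
    and \<eta>: "\<And>t. 1 \<le> t \<Longrightarrow> 0 < \<eta> t" "\<And>t. 1 \<le> t \<Longrightarrow> \<eta> (Suc t) \<le> \<eta> t"
    and opt: "\<And>t. 1 \<le> t \<Longrightarrow> f xs \<le> f (x t)"
    and B: "\<And>t. 0 \<le> bregman \<psi> g\<psi> xs (x (Suc t))"
    and descent: "\<And>t. 1 \<le> t \<Longrightarrow> \<eta> t * (f (x t) - f xs) + bregman \<psi> g\<psi> xs (x (Suc t)) - bregman \<psi> g\<psi> xs (x t)
                     \<le> e t + \<eta> t * (\<xi> t \<bullet> (x t - xs))"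
    and e: "\<And>t. 0 \<le> e t" "(\<Sum>t=1..T. e t) \<le> \<gamma>^2" and \<gamma>: "0 < \<gamma>" and Y: "0 \<le> Y"
    and partial: "\<And>s. 1 \<le> s \<Longrightarrow> s \<le> T \<Longrightarrow>
                   (\<Sum>t=1..s. \<eta> t * (\<xi> t \<bullet> ((1 / (sqrt 2 * D t)) *\<^sub>R (x t - xs)))) \<le> Y"
  shows "f ((1 / real T) *\<^sub>R (\<Sum>t=1..T. x t)) - f xs
           \<le> 3 * (bregman \<psi> g\<psi> xs (x 1) + \<gamma>^2 + 2 * Y^2) / (\<eta> T * real T)"
proof -
  have regret: "(\<Sum>t=1..T. \<eta> t * (f (x t) - f xs)) \<le> 3 * (bregman \<psi> g\<psi> xs (x 1) + \<gamma>^2 + 2 * Y^2)"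
  proof (rule running_max_recursion_bound[OF \<gamma> Y _ _ e _ partial,
        where u = "\<lambda>t. \<eta> t * (f (x t) - f xs)" and B = "\<lambda>t. bregman \<psi> g\<psi> xs (x t)"])
    show "0 \<le> \<eta> t * (f (x t) - f xs)" if "1 \<le> t" for t
      using \<eta>(1)[OF that] opt[OF that] by simp
    have D_pos: "0 < D t" for t
      using \<gamma> running_max_ge_base unfolding D_def by (rule less_le_trans)
    show "\<eta> t * (f (x t) - f xs) + bregman \<psi> g\<psi> xs (x (Suc t)) - bregman \<psi> g\<psi> xs (x t)
        \<le> e t + sqrt 2 * running_max \<gamma> (\<lambda>t. sqrt (bregman \<psi> g\<psi> xs (x t))) t
            * (\<eta> t * (\<xi> t \<bullet> ((1 / (sqrt 2 * D t)) *\<^sub>R (x t - xs))))"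
      if "1 \<le> t" for t
      using descent[OF that] D_pos[of t] by (simp add: D_def)
  qed (use B in simp)
  have "\<eta> T \<le> \<eta> t" if "1 \<le> t" "t \<le> T" for t
  proof (rule lift_Suc_antimono_le_ivl[of "{1..}"])
    show "{t..<T} \<subseteq> {1..}"
      using that by auto
  qed (use \<eta>(2) that in auto)
  then have "f ((1 / real T) *\<^sub>R (\<Sum>t=1..T. x t)) - f xs
      \<le> (\<Sum>t=1..T. \<eta> t * (f (x t) - f xs)) / (\<eta> T * real T)"
    using opt \<eta>(1) T by (intro convex_average_gap_le[OF f T]) auto
  also have "\<dots> \<le> 3 * (bregman \<psi> g\<psi> xs (x 1) + \<gamma>^2 + 2 * Y^2) / (\<eta> T * real T)"
    using regret \<eta>(1)[OF T] by (intro divide_right_mono) auto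
  finally show ?thesis .
qed

theorem theorem1:
  fixes N :: "real^'d \<Rightarrow> real"
    and X :: "(real^'d) set"
    and f :: "real^'d \<Rightarrow> real"
    and xs :: "real^'d"
    and psi :: "real^'d \<Rightarrow> real" and Dpsi :: "(real^'d) set" and gpsi :: "real^'d \<Rightarrow> real^'d"
    and M :: "'w measure"
    and \<xi> g x :: "nat \<Rightarrow> 'w \<Rightarrow> real^'d"
    and x1 :: "real^'d"
    and \<eta> :: "nat \<Rightarrow> real"
    and G \<sigma> \<delta> Y1 Y2 :: real
    and T :: nat
  assumes norm: "is_norm N"
    and X: "X \<noteq> {}" "closed X" "convex X"
    and f_conv: "convex_on UNIV f"
    and xs: "xs \<in> X" "\<forall>z\<in>X. f xs \<le> f z"
    \<comment> \<open>Assumption 1 (psi is +infinity outside Dpsi)\<close>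
    and psi_closed: "closed {(z, s). z \<in> Dpsi \<and> psi z \<le> s}"
    and psi_conv: "convex Dpsi" "convex_on Dpsi psi"
    and psi_int: "interior Dpsi \<noteq> {}"
    and psi_diff: "\<forall>y\<in>interior Dpsi. (psi has_derivative (\<lambda>h. gpsi y \<bullet> h)) (at y)"
    and psi_sc: "\<forall>u\<in>Dpsi. \<forall>y\<in>Dpsi. \<forall>v\<in>subgrad Dpsi psi y.
                   psi u \<ge> psi y + (u - y) \<bullet> v + 1/2 * (N (u - y))^2"
    and X_dom: "X \<subseteq> Dpsi"
    and psi_bd: "(\<forall>y :: nat \<Rightarrow> real^'d. \<forall>p. (\<forall>k. y k \<in> interior Dpsi) \<and> y \<longlonglongrightarrow> p
                    \<and> p \<in> frontier Dpsi \<longrightarrow> filterlim (\<lambda>k. norm (gpsi (y k))) at_top sequentially)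
                 \<or> X \<subseteq> interior Dpsi"
    and M: "prob_space M"
    and xi_meas: "\<forall>t\<ge>1. \<xi> t \<in> borel_measurable M"
    and xi_int: "\<forall>t\<ge>1. \<forall>i. integrable M (\<lambda>\<omega>. \<xi> t \<omega> $ i)"
    and xi_mean: "\<forall>t\<ge>1. \<forall>i. AE \<omega> in M.
                    real_cond_exp M (gen_filt M \<xi> (t - 1)) (\<lambda>\<omega>. \<xi> t \<omega> $ i) \<omega> = 0"
    and eta_pos: "\<forall>t\<ge>1. \<eta> t > 0"
    and eta_mono: "\<forall>t\<ge>1. \<eta> (Suc t) \<le> \<eta> t"
    and x1: "x1 \<in> X" "x1 \<in> interior Dpsi"
    and x_init: "\<forall>\<omega>\<in>space M. x 1 \<omega> = x1"
    and g_sub: "\<forall>t\<ge>1. \<forall>\<omega>\<in>space M. g t \<omega> \<in> subgrad UNIV f (x t \<omega>)"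
    and g_meas: "\<forall>t\<ge>1. g t \<in> borel_measurable (gen_filt M \<xi> (t - 1))"
    and x_step: "\<forall>t\<ge>1. \<forall>\<omega>\<in>space M. x (Suc t) \<omega> \<in> X \<and>
                   (\<forall>z\<in>X. (g t \<omega> - \<xi> t \<omega>) \<bullet> x (Suc t) \<omega>
                              + bregman psi gpsi (x (Suc t) \<omega>) (x t \<omega>) / \<eta> t
                          \<le> (g t \<omega> - \<xi> t \<omega>) \<bullet> z + bregman psi gpsi z (x t \<omega>) / \<eta> t)"
    \<comment> \<open>Assumption 2\<close>
    and A2: "\<forall>z\<in>X. \<forall>v\<in>subgrad UNIV f z. dual_norm N v \<le> G"
    \<comment> \<open>Assumption 3\<close>
    and xi_sq_int: "\<forall>t\<ge>1. integrable M (\<lambda>\<omega>. (dual_norm N (\<xi> t \<omega>))^2)"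
    and A3: "\<forall>t\<ge>1. AE \<omega> in M.
               real_cond_exp M (gen_filt M \<xi> (t - 1)) (\<lambda>\<omega>. (dual_norm N (\<xi> t \<omega>))^2) \<omega> \<le> \<sigma>^2"
    and T: "T \<ge> 1"
    and \<delta>: "0 < \<delta>" "\<delta> < 1"
    and Y: "Y1 > 0" "Y2 > 0"
    and H1: "\<exists>A\<in>sets M. prob_space.prob M A \<le> \<delta> / 2 \<and>
               {\<omega>\<in>space M. Max ((\<lambda>s. \<Sum>t=1..s. \<eta> t *
                   (\<xi> t \<omega> \<bullet> ((1 / (sqrt 2 * Dseq (sqrt (Y2 + (\<Sum>t=1..T. (\<eta> t)^2 * (G^2 + \<sigma>^2))))
                                                   psi gpsi xs x t \<omega>)) *\<^sub>R (x t \<omega> - xs)))) ` {1..T})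
                 > Y1} \<subseteq> A"
    and H2: "\<exists>A\<in>sets M. prob_space.prob M A \<le> \<delta> / 2 \<and>
               {\<omega>\<in>space M. (\<Sum>t=1..T. (\<eta> t)^2 * ((dual_norm N (\<xi> t \<omega>))^2
                   - real_cond_exp M (gen_filt M \<xi> (t - 1)) (\<lambda>\<omega>. (dual_norm N (\<xi> t \<omega>))^2) \<omega>))
                 > Y2} \<subseteq> A"
  shows "\<exists>E\<in>sets M. prob_space.prob M E \<ge> 1 - \<delta> \<and>
           (\<forall>\<omega>\<in>E. f ((1 / real T) *\<^sub>R (\<Sum>t=1..T. x t \<omega>)) - f xs
              \<le> 3 / (\<eta> T * real T) * (bregman psi gpsi xs x1
                   + (\<Sum>t=1..T. (\<eta> t)^2 * (G^2 + \<sigma>^2)) + 2 * Y1^2 + Y2))"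
proof -
  interpret prob_space M
    by (rule M)
  have cv: "convex_on Dpsi psi"
    using psi_conv by simp
  have iterates: "x t \<omega> \<in> X \<and> x t \<omega> \<in> interior Dpsi" if "1 \<le> t" "\<omega> \<in> space M" for t \<omega>
    using smd_iterates_interior[OF psi_conv X(3) X_dom psi_diff psi_bd, of "\<lambda>t. x t \<omega>" \<eta> "\<lambda>t. g t \<omega> - \<xi> t \<omega>"]
      x1 x_init x_step eta_pos that by simp
  have half_sq: "1/2 * (N (u - x t \<omega>))^2 \<le> bregman psi gpsi u (x t \<omega>)"
    if "1 \<le> t" "\<omega> \<in> space M" "u \<in> Dpsi" for t \<omega> u
    using bregman_ge_half_sq[OF cv _ that(3) _ psi_sc] iterates[OF that(1,2)] interior_subset psi_diff by blast
  have descent: "\<eta> t * (f (x t \<omega>) - f xs) + bregman psi gpsi xs (x (Suc t) \<omega>) - bregman psi gpsi xs (x t \<omega>)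
      \<le> (\<eta> t)^2 * (G^2 + (dual_norm N (\<xi> t \<omega>))^2) + \<eta> t * (\<xi> t \<omega> \<bullet> (x t \<omega> - xs))"
    if "1 \<le> t" "\<omega> \<in> space M" for t \<omega>
  proof (rule smd_one_step_inequality[OF norm X(3) _ xs(1)])
    have next_it: "x (Suc t) \<omega> \<in> X" "x (Suc t) \<omega> \<in> interior Dpsi"
      using iterates[of "Suc t" \<omega>] that by auto
    then show "x (Suc t) \<omega> \<in> X" "(psi has_derivative (\<lambda>h. gpsi (x (Suc t) \<omega>) \<bullet> h)) (at (x (Suc t) \<omega>))"
      using psi_diff by auto
    show "1/2 * (N (x (Suc t) \<omega> - x t \<omega>))^2 \<le> bregman psi gpsi (x (Suc t) \<omega>) (x t \<omega>)"
      using half_sq[OF that] next_it X_dom by blast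
    show "g t \<omega> \<in> subgrad UNIV f (x t \<omega>)" "dual_norm N (g t \<omega>) \<le> G"
      using g_sub A2 iterates[OF that] that by auto
  qed (use eta_pos x_step that in auto)
  define \<gamma> where "\<gamma> = sqrt (Y2 + (\<Sum>t=1..T. (\<eta> t)^2 * (G^2 + \<sigma>^2)))"
  have "0 \<le> (\<Sum>t=1..T. (\<eta> t)^2 * (G^2 + \<sigma>^2))"
    by (intro sum_nonneg) simp
  then have \<gamma>: "0 < \<gamma>" "\<gamma>^2 = Y2 + (\<Sum>t=1..T. (\<eta> t)^2 * (G^2 + \<sigma>^2))"
    using Y by (simp_all add: \<gamma>_def)
  have cond_var: "AE \<omega> in M. \<forall>t\<in>{1..T}.
      real_cond_exp M (gen_filt M \<xi> (t - 1)) (\<lambda>\<omega>. (dual_norm N (\<xi> t \<omega>))^2) \<omega> \<le> \<sigma>^2"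
    using A3 by (intro AE_finite_allI) auto
  have bound: "f ((1 / real T) *\<^sub>R (\<Sum>t=1..T. x t \<omega>)) - f xs
      \<le> 3 / (\<eta> T * real T) * (bregman psi gpsi xs x1
           + (\<Sum>t=1..T. (\<eta> t)^2 * (G^2 + \<sigma>^2)) + 2 * Y1^2 + Y2)"
    if \<omega>: "\<omega> \<in> space M"
      and partial: "Max ((\<lambda>s. \<Sum>t=1..s. \<eta> t *
        (\<xi> t \<omega> \<bullet> ((1 / (sqrt 2 * Dseq \<gamma> psi gpsi xs x t \<omega>)) *\<^sub>R (x t \<omega> - xs)))) ` {1..T}) \<le> Y1"
      and noise: "(\<Sum>t=1..T. (\<eta> t)^2 * ((dual_norm N (\<xi> t \<omega>))^2
        - real_cond_exp M (gen_filt M \<xi> (t - 1)) (\<lambda>\<omega>. (dual_norm N (\<xi> t \<omega>))^2) \<omega>)) \<le> Y2"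
      and var: "\<forall>t\<in>{1..T}.
        real_cond_exp M (gen_filt M \<xi> (t - 1)) (\<lambda>\<omega>. (dual_norm N (\<xi> t \<omega>))^2) \<omega> \<le> \<sigma>^2"
    for \<omega>
  proof -
    have "f ((1 / real T) *\<^sub>R (\<Sum>t=1..T. x t \<omega>)) - f xs
        \<le> 3 * (bregman psi gpsi xs (x 1 \<omega>) + \<gamma>^2 + 2 * Y1^2) / (\<eta> T * real T)"
    proof (rule smd_trajectory_bound[OF f_conv T, where e = "\<lambda>t. (\<eta> t)^2 * (G^2 + (dual_norm N (\<xi> t \<omega>))^2)"])
      show "(\<Sum>t=1..T. (\<eta> t)^2 * (G^2 + (dual_norm N (\<xi> t \<omega>))^2)) \<le> \<gamma>^2"
        using weighted_noise_sum_le[OF noise] var \<gamma>(2) by auto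
      show "0 \<le> bregman psi gpsi xs (x (Suc t) \<omega>)" for t
      proof -
        have "1/2 * (N (xs - x (Suc t) \<omega>))^2 \<le> bregman psi gpsi xs (x (Suc t) \<omega>)"
          using half_sq[OF _ \<omega>, of "Suc t" xs] xs(1) X_dom by auto
        then show ?thesis
          by (rule order_trans[rotated]) simp
      qed
      show "(\<Sum>t=1..s. \<eta> t * (\<xi> t \<omega> \<bullet> ((1 / (sqrt 2 * running_max \<gamma> (\<lambda>t. sqrt (bregman psi gpsi xs (x t \<omega>))) t))
          *\<^sub>R (x t \<omega> - xs)))) \<le> Y1" if "1 \<le> s" "s \<le> T" for s
        using partial that by (simp add: Dseq_eq_running_max Max_le_iff)
      show "f xs \<le> f (x t \<omega>)" if "1 \<le> t" for t
        using xs(2) iterates[OF that \<omega>] by blast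
    qed (use eta_pos eta_mono descent[OF _ \<omega>] \<gamma>(1) Y in simp_all)
    then show ?thesis
      using x_init \<omega> by (simp add: \<gamma>(2) add_ac)
  qed
  from union_bound_good_event[OF H1[folded \<gamma>_def] H2 cond_var]
  show ?thesis
    using bound by (fastforce simp: not_less)
qed

end
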